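(* Let $g$ be a positive integer and $\Gamma=\langle 2,2g+1\rangle$ (the numerical semigroup generated by $2$ and $2g+1$). For every integer $k\ge0$, \[ \delta^1_\Gamma(2g+2+k)=\delta^2_\Gamma(2g+k). \]
   Context: For a numerical semigroup $\Gamma$: $D_\Gamma(x)=\{s\in\Gamma:x-s\in\Gamma\}$, $\delta^1_\Gamma(m)=\min\{|D_\Gamma(m_1)|: m\le m_1\in\Gamma\}$, and $\delta^2_\Gamma(m)=\min\{|D_\Gamma(m_1)\cup D_\Gamma(m_2)|: m\le m_1<m_2,\ m_1,m_2\in\Gamma\}$. *)

theory Defs
  imports Main
begin

definition semigroup2 :: "nat \<Rightarrow> nat \<Rightarrow> nat set" where
  "semigroup2 a b = {a * i + b * j | i j. True}"

text \<open>D_Gamma(x) = {s in Gamma : x - s in Gamma}; as elements of Gamma are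
  nonnegative, x - s in Gamma forces s <= x, so truncated subtraction is harmless.\<close>
definition Dset :: "nat set \<Rightarrow> nat \<Rightarrow> nat set" where
  "Dset G x = {s \<in> G. s \<le> x \<and> x - s \<in> G}"

definition delta1 :: "nat set \<Rightarrow> nat \<Rightarrow> nat" where
  "delta1 G m = (LEAST n. \<exists>m1. m \<le> m1 \<and> m1 \<in> G \<and> n = card (Dset G m1))"

definition delta2 :: "nat set \<Rightarrow> nat \<Rightarrow> nat" where
  "delta2 G m = (LEAST n. \<exists>m1 m2. m \<le> m1 \<and> m1 < m2 \<and> m1 \<in> G \<and> m2 \<in> G \<and>
                   n = card (Dset G m1 \<union> Dset G m2))"

end

theory Submission
  imports Defs
begin

text \<open>Once m lies beyond the conductor, a minimiser y of \<open>delta1\<close> above m + 2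
  yields the pair (y - 2, y), whose union is just \<open>Dset G y\<close>; so \<open>delta2 G m \<le> delta1 G (m + 2)\<close>.
  Conversely, a minimising pair for \<open>delta2 G m\<close> either has its larger element at least m + 2,
  or it is the pair (m, m + 1). In the latter case, for \<open>\<langle>2, 2g + 1\<rangle>\<close> every s \<le> m in the
  semigroup has m - s or m + 1 - s even, so \<open>Dset G m \<union> Dset G (m + 1)\<close> contains all semigroup
  elements up to m together with m + 1, whereas \<open>Dset G (m + 2)\<close> contains at most those up to m
  together with m + 2, because 1 is a gap.\<close>

lemma finite_Dset: "finite (Dset G x)"
  by (rule finite_subset[of _ "{..x}"]) (auto simp: Dset_def)

lemma Dset_subset_Dset_add:
  assumes "\<And>x. x \<in> G \<Longrightarrow> x + a \<in> G"
  shows "Dset G x \<subseteq> Dset G (x + a)"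
proof
  fix s assume "s \<in> Dset G x"
  then have "s \<in> G" "s \<le> x" "x - s \<in> G" by (auto simp: Dset_def)
  moreover have "x + a - s = (x - s) + a" using \<open>s \<le> x\<close> by simp
  ultimately show "s \<in> Dset G (x + a)" using assms[of "x - s"] by (simp add: Dset_def)
qed

lemma delta1_le:
  assumes "m \<le> m1" "m1 \<in> G"
  shows "delta1 G m \<le> card (Dset G m1)"
  unfolding delta1_def by (rule Least_le) (use assms in blast)

lemma delta2_le:
  assumes "m \<le> m1" "m1 < m2" "m1 \<in> G" "m2 \<in> G"
  shows "delta2 G m \<le> card (Dset G m1 \<union> Dset G m2)"
  unfolding delta2_def by (rule Least_le) (use assms in blast)

lemma delta1_attained:
  assumes "m \<le> m1" "m1 \<in> G"
  obtains y where "m \<le> y" "y \<in> G" "delta1 G m = card (Dset G y)"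
proof -
  have "\<exists>n y. m \<le> y \<and> y \<in> G \<and> n = card (Dset G y)" using assms by blast
  from LeastI_ex[OF this] show thesis using that unfolding delta1_def by blast
qed

lemma delta2_attained:
  assumes "m \<le> m1" "m1 < m2" "m1 \<in> G" "m2 \<in> G"
  obtains y1 y2 where "m \<le> y1" "y1 < y2" "y1 \<in> G" "y2 \<in> G"
    "delta2 G m = card (Dset G y1 \<union> Dset G y2)"
proof -
  have "\<exists>n y1 y2. m \<le> y1 \<and> y1 < y2 \<and> y1 \<in> G \<and> y2 \<in> G \<and> n = card (Dset G y1 \<union> Dset G y2)"
    using assms by blast
  from LeastI_ex[OF this] show thesis using that unfolding delta2_def by blast
qed

lemma delta2_le_delta1_add:
  assumes closed: "\<And>x. x \<in> G \<Longrightarrow> x + a \<in> G" and "0 < a"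
    and conductor: "\<And>x. m \<le> x \<Longrightarrow> x \<in> G"
  shows "delta2 G m \<le> delta1 G (m + a)"
proof -
  obtain y where y: "m + a \<le> y" "y \<in> G" "delta1 G (m + a) = card (Dset G y)"
    using delta1_attained[of "m + a" "m + a" G] conductor by auto
  have "Dset G (y - a) \<union> Dset G y = Dset G y"
    using Dset_subset_Dset_add[OF closed, of "y - a"] y(1) by (simp add: Un_absorb1)
  moreover have "delta2 G m \<le> card (Dset G (y - a) \<union> Dset G y)"
    using y \<open>0 < a\<close> conductor by (intro delta2_le) auto
  ultimately show ?thesis using y(3) by simp
qed

lemma delta1_add2_le_delta2:
  assumes conductor: "\<And>x. m \<le> x \<Longrightarrow> x \<in> G"
    and pair: "card (Dset G (m + 2)) \<le> card (Dset G m \<union> Dset G (m + 1))"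
  shows "delta1 G (m + 2) \<le> delta2 G m"
proof -
  obtain y1 y2 where y: "m \<le> y1" "y1 < y2" "y1 \<in> G" "y2 \<in> G"
    and eq: "delta2 G m = card (Dset G y1 \<union> Dset G y2)"
    using delta2_attained[of m m "m + 1" G] conductor by auto
  show ?thesis
  proof (cases "m + 2 \<le> y2")
    case True
    have "card (Dset G y2) \<le> card (Dset G y1 \<union> Dset G y2)"
      by (rule card_mono) (auto simp: finite_Dset)
    then show ?thesis using delta1_le[OF True y(4)] eq by simp
  next
    case False
    then have "y1 = m" "y2 = m + 1" using y(1,2) by auto
    then show ?thesis using delta1_le[of "m + 2" "m + 2" G] conductor pair eq by simp
  qed
qed

lemma mem_semigroup2_2_odd: "x \<in> semigroup2 2 (2*g+1) \<longleftrightarrow> even x \<or> 2*g+1 \<le> x"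
proof
  assume "x \<in> semigroup2 2 (2*g+1)"
  then obtain i j where "x = 2*i + (2*g+1)*j" by (auto simp: semigroup2_def)
  then show "even x \<or> 2*g+1 \<le> x" by (cases j) auto
next
  assume h: "even x \<or> 2*g+1 \<le> x"
  show "x \<in> semigroup2 2 (2*g+1)"
  proof (cases "even x")
    case True
    then have "x = 2*(x div 2) + (2*g+1)*0" by simp
    then show ?thesis unfolding semigroup2_def by blast
  next
    case False
    then have "x = 2*((x - (2*g+1)) div 2) + (2*g+1)*1" using h by presburger
    then show ?thesis unfolding semigroup2_def by blast
  qed
qed

lemma card_Dset_semigroup2_2_odd:
  fixes g m :: nat
  defines "G \<equiv> semigroup2 2 (2*g+1)"
  assumes "1 \<le> g" "2*g \<le> m"
  shows "card (Dset G (m + 2)) \<le> card (Dset G m \<union> Dset G (m + 1))"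
proof -
  have memG: "x \<in> G \<longleftrightarrow> even x \<or> 2*g+1 \<le> x" for x
    unfolding G_def by (rule mem_semigroup2_2_odd)
  define L where "L = {s \<in> G. s \<le> m}"
  have "finite L" unfolding L_def by simp
  have "Dset G (m + 2) \<subseteq> insert (m + 2) L"
  proof
    fix s assume s: "s \<in> Dset G (m + 2)"
    have "s \<noteq> m + 1" using s \<open>1 \<le> g\<close> memG[of 1] by (auto simp: Dset_def)
    with s show "s \<in> insert (m + 2) L" by (auto simp: Dset_def L_def)
  qed
  then have "card (Dset G (m + 2)) \<le> card (insert (m + 2) L)"
    using \<open>finite L\<close> by (intro card_mono) auto
  also have "\<dots> = Suc (card L)" using \<open>finite L\<close> by (simp add: L_def)
  also have "\<dots> = card (insert (m + 1) L)" using \<open>finite L\<close> by (simp add: L_def)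
  also have "\<dots> \<le> card (Dset G m \<union> Dset G (m + 1))"
  proof (rule card_mono)
    show "finite (Dset G m \<union> Dset G (m + 1))" by (simp add: finite_Dset)
    have "m + 1 \<in> G" "0 \<in> G" using memG \<open>2*g \<le> m\<close> by auto
    moreover have "s \<in> Dset G m \<union> Dset G (m + 1)" if "s \<in> L" for s
    proof -
      have "s \<in> G" "s \<le> m" using that by (auto simp: L_def)
      moreover have "even (m - s) \<or> even (m + 1 - s)" using \<open>s \<le> m\<close> by presburger
      ultimately show ?thesis using memG by (auto simp: Dset_def)
    qed
    ultimately show "insert (m + 1) L \<subseteq> Dset G m \<union> Dset G (m + 1)"
      by (auto simp: Dset_def)
  qed
  finally show ?thesis .
qed

theorem lemma5p1:
  fixes g k :: nat
  assumes "g \<ge> 1"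
  shows "delta1 (semigroup2 2 (2*g+1)) (2*g+2+k) = delta2 (semigroup2 2 (2*g+1)) (2*g+k)"
proof -
  define G where "G = semigroup2 2 (2*g+1)"
  define m where "m = 2*g+k"
  have memG: "x \<in> G \<longleftrightarrow> even x \<or> 2*g+1 \<le> x" for x
    unfolding G_def by (rule mem_semigroup2_2_odd)
  have closed: "x + 2 \<in> G" if "x \<in> G" for x using that memG by auto
  have conductor: "x \<in> G" if "m \<le> x" for x using that memG m_def by presburger
  have "delta2 G m \<le> delta1 G (m + 2)"
    using delta2_le_delta1_add[OF closed _ conductor] by simp
  moreover have "delta1 G (m + 2) \<le> delta2 G m"
    using delta1_add2_le_delta2[OF conductor] card_Dset_semigroup2_2_odd[OF assms] m_def G_def
    by simp
  ultimately show ?thesis unfolding G_def[symmetric] m_def by (simp add: add.commute add.left_commute)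
qed

end
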